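(* Let $d>K\ge1$, $\mathbf Q\in\mathrm{St}(d,K)$, $\lambda_1>\dots>\lambda_K>0$, $\boldsymbol\Theta=\mathrm{diag}(\sqrt{\lambda_1},\dots,\sqrt{\lambda_K})$, $a_1>\dots>a_K>0$, and let $g$, $d_F$, $\mathcal A_\alpha$, $\mathcal P_{\mathrm{St}}$ be as in the context. There exist $\delta\in(0,\tfrac{\sqrt2}{2})$ with $\lambda_Ka_K-\lambda_1a_1\delta>0$ and $\bar\eta>0$ satisfying $g(\mathbf Q)-g(\mathbf X)\ge\bar\eta\,d_F^2(\mathbf X,\mathbf Q)$ for all $\mathbf X\in\mathrm{St}(d,K)$, such that for every $\alpha\in(0,\lambda_Ka_K-\lambda_1a_1\delta)$ there exist constants $a>0$ and $\gamma\in(0,1)$ with the following property: for every $\mathbf X^0\in\mathrm{St}(d,K)$ with $g(\mathbf Q)-g(\mathbf X^0)\le\delta^2\bar\eta$ and every sequence generated by $\mathbf X^{t+1}\in\mathcal P_{\mathrm{St}}(\mathcal A_\alpha(\mathbf X^t))$, $t=0,1,\dots$, we have for all $t\ge0$ $$g(\mathbf Q)-g(\mathbf X^{t+1})\le\gamma\big(g(\mathbf Q)-g(\mathbf X^t)\big)\quad\text{and}\quad d_F(\mathbf X^t,\mathbf Q)\le a\big(g(\mathbf Q)-g(\mathbf X^0)\big)^{1/2}(\sqrt\gamma)^t.$$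
   Context: $\mathrm{St}(d,K)=\{\mathbf X\in\mathbb R^{d\times K}:\mathbf X^\top\mathbf X=\mathbf I_K\}$. $g(\mathbf X)=\mathrm{tr}(\mathbf X^\top\mathbf Q\boldsymbol\Theta^2\mathbf Q^\top\mathbf X\,\mathrm{diag}(a_1,\dots,a_K))$ (maximized over $\mathrm{St}(d,K)$). $d_F(\mathbf X,\mathbf Q)=\min_{\mathbf q\in\{1,-1\}^K}\|\mathbf X-\mathbf Q\,\mathrm{diag}(\mathbf q)\|_F$. $\mathcal A_\alpha(\mathbf X)=\alpha\mathbf X+\mathbf Q\boldsymbol\Theta^2\mathbf Q^\top\mathbf X\,\mathrm{diag}(a_1,\dots,a_K)$. $\mathcal P_{\mathrm{St}}(\mathbf Y)$ is the set of Frobenius-nearest points of $\mathrm{St}(d,K)$ to $\mathbf Y$ (containing $\mathbf U\mathbf V^\top$ for any thin SVD $\mathbf Y=\mathbf U\boldsymbol\Sigma\mathbf V^\top$); any element may be chosen. *)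

theory Defs
  imports "HOL-Analysis.Analysis"
begin

text \<open>Matrices in R^(d x K) are represented as real^'k^'d (rows indexed by 'd, columns by 'k).
  The norm on real^'k^'d is the Frobenius norm.\<close>

definition Stiefel :: "(real^'k^'d) set" where
  "Stiefel = {X. transpose X ** X = mat 1}"

definition diagm :: "('k \<Rightarrow> real) \<Rightarrow> real^'k^'k" where
  "diagm v = (\<chi> i j. if i = j then v i else 0)"

definition Theta :: "('k \<Rightarrow> real) \<Rightarrow> real^'k^'k" where
  "Theta lam = diagm (\<lambda>i. sqrt (lam i))"

definition gfun :: "real^'k^'d \<Rightarrow> ('k \<Rightarrow> real) \<Rightarrow> ('k \<Rightarrow> real) \<Rightarrow> real^'k^'d \<Rightarrow> real" where
  "gfun Q lam a X =
     trace (transpose X ** Q ** (Theta lam ** Theta lam) ** transpose Q ** X ** diagm a)"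

definition dF :: "real^'k^'d \<Rightarrow> real^'k^'d \<Rightarrow> real" where
  "dF X Q = Min {norm (X - Q ** diagm q) | q. \<forall>i. q i \<in> {1, -1}}"

definition Aop :: "real \<Rightarrow> real^'k^'d \<Rightarrow> ('k \<Rightarrow> real) \<Rightarrow> ('k \<Rightarrow> real) \<Rightarrow> real^'k^'d \<Rightarrow> real^'k^'d" where
  "Aop alpha Q lam a X = alpha *\<^sub>R X + Q ** (Theta lam ** Theta lam) ** transpose Q ** X ** diagm a"

definition PSt :: "real^'k^'d \<Rightarrow> (real^'k^'d) set" where
  "PSt Y = {X \<in> Stiefel. \<forall>Z \<in> Stiefel. norm (Y - X) \<le> norm (Y - Z)}"

end

theory Submission
  imports Defs
begin

text \<open>
  Write \<open>g(X) = \<langle>X, M X D\<rangle>\<close> with \<open>M = Q \<Lambda> Q\<^sup>T\<close>, \<open>\<Lambda> = diag \<lambda>\<close> and \<open>D = diag a\<close>.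

  Quadratic growth: \<open>P\<^sub>i\<^sub>j = (Q\<^sup>T X)\<^sub>i\<^sub>j\<^sup>2\<close> is doubly substochastic and
  \<open>g(X) = \<Sum> \<lambda>\<^sub>i a\<^sub>j P\<^sub>i\<^sub>j\<close>. Because \<open>\<lambda>\<close> and \<open>a\<close> are both strictly decreasing there are dual
  potentials with \<open>u\<^sub>i + v\<^sub>j \<ge> \<lambda>\<^sub>i a\<^sub>j + c\<close> off the diagonal and equality on it, whence
  \<open>g(Q) - g(X) \<ge> c \<Sum>\<^sub>j (1 - P\<^sub>j\<^sub>j) \<ge> (c/2) d\<^sub>F(X, Q)\<^sup>2\<close>.

  Contraction: the update maximises \<open>\<langle>\<A>\<^sub>\<alpha>(X), \<cdot>\<rangle>\<close> over the Stiefel manifold, so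
  \<open>g(Y) - g(X) \<ge> 2\<langle>M X D, Z - X\<rangle> - \<alpha>\<parallel>Z - X\<parallel>\<^sup>2\<close> for every \<open>Z\<close> on it. Choosing for \<open>Z\<close> the
  Cayley retraction of \<open>X + \<theta> V\<close>, where \<open>V\<close> is the tangent projection of \<open>Q' - X\<close> and \<open>Q'\<close> the
  signed copy of \<open>Q\<close> nearest to \<open>X\<close>, gives
  \<open>g(Y) - g(X) \<ge> 2\<theta> (g(Q) - g(X)) - O(\<theta> \<epsilon>\<^sup>3) - O(\<theta>\<^sup>2 \<epsilon>\<^sup>2)\<close> with \<open>\<epsilon> = d\<^sub>F(X, Q)\<close>.
  Near \<open>Q\<close> quadratic growth absorbs both error terms, so the gap contracts by the factor
  \<open>1 - \<theta>\<close>, and growth turns the decay of the gap into the decay of \<open>d\<^sub>F\<close>.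
\<close>

section \<open>Frobenius calculus for real matrices\<close>

lemma matrix_mult_nth: "((A::real^'n^'m) ** B) $ i $ j = (\<Sum>k\<in>UNIV. A$i$k * B$k$j)"
  by (simp add: matrix_matrix_mult_def)

lemma transpose_nth [simp]: "transpose (A::real^'n^'m) $ i $ j = A $ j $ i"
  by (simp add: transpose_def)

lemma matrix_add_rdistrib: "((A::real^'n^'m) + B) ** C = A ** C + B ** C"
  by (simp add: matrix_matrix_mult_def vec_eq_iff algebra_simps sum.distrib)

lemma matrix_diff_ldistrib: "(A::real^'n^'m) ** (B - C) = A ** B - A ** C"
  by (simp add: matrix_matrix_mult_def vec_eq_iff algebra_simps sum_subtractf)

lemma matrix_diff_rdistrib: "((A::real^'n^'m) - B) ** C = A ** C - B ** C"
  by (simp add: matrix_matrix_mult_def vec_eq_iff algebra_simps sum_subtractf)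

lemma matrix_uminus_left: "(- (A::real^'n^'m)) ** B = - (A ** B)"
  by (simp add: matrix_matrix_mult_def vec_eq_iff sum_negf)

lemma matrix_uminus_right: "(A::real^'n^'m) ** (- B) = - (A ** B)"
  by (simp add: matrix_matrix_mult_def vec_eq_iff sum_negf)

lemma matrix_scaleR_left: "(c *\<^sub>R (A::real^'n^'m)) ** B = c *\<^sub>R (A ** B)"
  by (simp add: scalar_matrix_assoc)

lemma matrix_scaleR_right: "(A::real^'n^'m) ** (c *\<^sub>R B) = c *\<^sub>R (A ** B)"
  by (simp add: matrix_scalar_ac scalar_matrix_assoc)

lemma transpose_add: "transpose ((A::real^'n^'m) + B) = transpose A + transpose B"
  by (simp add: vec_eq_iff)

lemma transpose_diff: "transpose ((A::real^'n^'m) - B) = transpose A - transpose B"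
  by (simp add: vec_eq_iff)

lemma transpose_uminus: "transpose (- (A::real^'n^'m)) = - transpose A"
  by (simp add: vec_eq_iff)

text \<open>On \<open>real^'n^'m\<close> the operation \<open>*\<close> is the entrywise product, and \<open>algebra_simps\<close> rewrites
  \<open>A + A\<close> to \<open>2 * A\<close>.\<close>

lemma matrix_times_two: "(2::real^'n^'m) * A = 2 *\<^sub>R A" "A * (2::real^'n^'m) = 2 *\<^sub>R A"
  by (simp_all add: vec_eq_iff)

lemmas matrix_algebra_simps =
  matrix_add_ldistrib matrix_add_rdistrib matrix_diff_ldistrib matrix_diff_rdistrib
  matrix_uminus_left matrix_uminus_right matrix_scaleR_left matrix_scaleR_right
  transpose_add transpose_diff transpose_uminus transpose_scalar transpose_transpose
  matrix_transpose_mul matrix_mul_assoc[symmetric] times0_left times0_right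

lemma inner_matrix: "inner (A::real^'n^'m) B = (\<Sum>i\<in>UNIV. \<Sum>j\<in>UNIV. A$i$j * B$i$j)"
  by (simp add: inner_vec_def)

lemma inner_matrix_mult_left: "inner ((A::real^'n^'m) ** B) C = inner B (transpose A ** C)"
proof -
  have "inner (A ** B) C = (\<Sum>i\<in>UNIV. \<Sum>k\<in>UNIV. \<Sum>j\<in>UNIV. A$i$k * B$k$j * C$i$j)"
    by (simp add: inner_matrix matrix_mult_nth sum_distrib_right, subst sum.swap, simp)
  also have "\<dots> = (\<Sum>k\<in>UNIV. \<Sum>i\<in>UNIV. \<Sum>j\<in>UNIV. A$i$k * B$k$j * C$i$j)"
    by (rule sum.swap)
  also have "\<dots> = (\<Sum>k\<in>UNIV. \<Sum>j\<in>UNIV. \<Sum>i\<in>UNIV. A$i$k * B$k$j * C$i$j)"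
    by (rule sum.cong[OF refl], rule sum.swap)
  also have "\<dots> = inner B (transpose A ** C)"
    by (simp add: inner_matrix matrix_mult_nth sum_distrib_left mult_ac)
  finally show ?thesis .
qed

lemma inner_matrix_mult_right: "inner ((A::real^'n^'m) ** B) C = inner A (C ** transpose B)"
proof -
  have "inner (A ** B) C = (\<Sum>i\<in>UNIV. \<Sum>j\<in>UNIV. \<Sum>k\<in>UNIV. A$i$k * B$k$j * C$i$j)"
    by (simp add: inner_matrix matrix_mult_nth sum_distrib_right)
  also have "\<dots> = (\<Sum>i\<in>UNIV. \<Sum>k\<in>UNIV. \<Sum>j\<in>UNIV. A$i$k * B$k$j * C$i$j)"
    by (rule sum.cong, simp) (rule sum.swap)
  also have "\<dots> = inner A (C ** transpose B)"
    by (simp add: inner_matrix matrix_mult_nth sum_distrib_left mult_ac)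
  finally show ?thesis .
qed

lemma inner_transpose: "inner (transpose (A::real^'n^'m)) (transpose B) = inner A B"
  unfolding inner_matrix by (simp, subst sum.swap, simp)

lemma norm_transpose: "norm (transpose (A::real^'n^'m)) = norm A"
  by (simp add: norm_eq_sqrt_inner inner_transpose)

lemma trace_transpose_mult: "trace (transpose (X::real^'n^'m) ** N) = inner X N"
  by (simp add: trace_def matrix_mult_nth inner_matrix, subst sum.swap, simp)

lemma norm_matrix_sq: "(norm (A::real^'n^'m))\<^sup>2 = (\<Sum>i\<in>UNIV. \<Sum>j\<in>UNIV. (A$i$j)\<^sup>2)"
  by (simp only: power2_norm_eq_inner) (simp add: inner_matrix power2_eq_square)

lemma norm_vec_sq: "(norm (v::real^'n))\<^sup>2 = (\<Sum>j\<in>UNIV. (v$j)\<^sup>2)"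
  by (simp only: power2_norm_eq_inner) (simp add: inner_vec_def power2_eq_square)

lemma norm_matrix_mult_le: "norm ((A::real^'n^'m) ** B) \<le> norm A * norm B"
proof -
  have entry: "((A ** B)$i$j)\<^sup>2 \<le> (norm (A$i))\<^sup>2 * (norm (column j B))\<^sup>2" for i j
  proof -
    have "(A ** B)$i$j = inner (A$i) (column j B)"
      by (simp add: matrix_mult_nth inner_vec_def column_def)
    then have "\<bar>(A ** B)$i$j\<bar> \<le> norm (A$i) * norm (column j B)"
      by (simp add: Cauchy_Schwarz_ineq2)
    then show ?thesis
      by (metis abs_ge_zero power_mono power_mult_distrib power2_abs)
  qed
  have "(norm (A ** B))\<^sup>2 \<le> (\<Sum>i\<in>UNIV. \<Sum>j\<in>UNIV. (norm (A$i))\<^sup>2 * (norm (column j B))\<^sup>2)"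
    unfolding norm_matrix_sq by (intro sum_mono entry)
  also have "\<dots> = (\<Sum>i\<in>UNIV. (norm (A$i))\<^sup>2) * (\<Sum>j\<in>UNIV. (norm (column j B))\<^sup>2)"
    by (rule sum_product[symmetric])
  also have "(\<Sum>i\<in>UNIV. (norm (A$i))\<^sup>2) = (norm A)\<^sup>2"
    by (simp add: norm_matrix_sq norm_vec_sq)
  also have "(\<Sum>j\<in>UNIV. (norm (column j B))\<^sup>2) = (norm B)\<^sup>2"
    by (simp add: norm_matrix_sq norm_vec_sq column_def, subst sum.swap, simp)
  finally have "(norm (A ** B))\<^sup>2 \<le> (norm A * norm B)\<^sup>2"
    by (simp add: power_mult_distrib)
  then show ?thesis
    by (rule power2_le_imp_le) simp
qed

lemma norm_matrix_mult3_le: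
  "norm ((A::real^'n^'m) ** B ** C) \<le> norm A * norm B * norm C"
  by (meson norm_matrix_mult_le mult_right_mono norm_ge_zero order_trans)

lemma diagm_nth: "diagm v $ i $ j = (if i = j then v i else 0)"
  by (simp add: diagm_def)

lemma diagm_mult_left_nth: "(diagm v ** A) $ i $ j = v i * A $ i $ j"
  by (simp add: matrix_mult_nth diagm_nth if_distrib if_distribR cong: if_cong)

lemma diagm_mult_right_nth: "(A ** diagm v) $ i $ j = A $ i $ j * v j"
  by (simp add: matrix_mult_nth diagm_nth if_distrib if_distribR cong: if_cong)

lemma transpose_diagm [simp]: "transpose (diagm v) = diagm v"
  by (simp add: vec_eq_iff diagm_nth)

lemma diagm_mult_diagm: "diagm v ** diagm w = diagm (\<lambda>i. v i * w i)"
  by (simp add: vec_eq_iff diagm_mult_left_nth diagm_nth)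

lemma diagm_one: "diagm (\<lambda>i. 1) = mat 1"
  by (simp add: vec_eq_iff diagm_nth mat_def)

lemma Theta_mult_Theta: "(\<And>i. lam i \<ge> 0) \<Longrightarrow> Theta lam ** Theta lam = diagm lam"
  by (simp add: Theta_def diagm_mult_diagm)

lemma inner_diagm: "inner A (diagm v) = (\<Sum>i\<in>UNIV. A$i$i * v i)"
  by (simp add: inner_matrix diagm_nth if_distrib if_distribR cong: if_cong)

section \<open>The Stiefel manifold\<close>

lemma Stiefel_cancel: "X \<in> Stiefel \<Longrightarrow> transpose X ** (X ** B) = B"
  by (simp add: Stiefel_def matrix_mul_assoc)

lemma inner_Stiefel_mult: "X \<in> Stiefel \<Longrightarrow> inner (X ** B) (X ** C) = inner B C"
  by (simp add: inner_matrix_mult_left Stiefel_cancel)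

lemma inner_self_Stiefel:
  assumes "(X::real^'k^'d) \<in> Stiefel"
  shows "inner X X = real CARD('k)"
proof -
  have "inner (mat 1) (mat 1 :: real^'k^'k) = real CARD('k)"
    by (simp add: inner_matrix mat_def if_distrib if_distribR cong: if_cong)
  then show ?thesis
    using inner_Stiefel_mult[OF assms, of "mat 1" "mat 1"] by simp
qed

lemma norm_Stiefel: "(X::real^'k^'d) \<in> Stiefel \<Longrightarrow> norm X = sqrt (real CARD('k))"
  by (simp add: norm_eq_sqrt_inner inner_self_Stiefel)

lemma inner_Stiefel_le:
  assumes "X \<in> Stiefel" "Y \<in> Stiefel"
  shows "inner (X::real^'k^'d) Y \<le> real CARD('k)"
proof -
  have "0 \<le> (norm (X - Y))\<^sup>2" by simp
  then show ?thesis
    using inner_self_Stiefel[OF assms(1)] inner_self_Stiefel[OF assms(2)]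
    by (simp add: power2_norm_eq_inner inner_diff_left inner_diff_right inner_commute)
qed

lemma Stiefel_mult_signs:
  assumes "Q \<in> Stiefel" "\<forall>i. q i \<in> {1, -1}"
  shows "Q ** diagm q \<in> Stiefel"
proof -
  have "q i * q i = 1" for i
    using assms(2) by (cases "q i = 1") auto
  then have "diagm (\<lambda>i. q i * q i) = mat 1"
    by (simp add: diagm_one)
  then show ?thesis
    using assms(1) by (simp add: Stiefel_def matrix_algebra_simps Stiefel_cancel diagm_mult_diagm)
qed

lemma Stiefel_diff_relation:
  assumes "Q \<in> Stiefel" "X \<in> Stiefel"
  shows "transpose X ** (X - Q) + transpose (X - Q) ** X = transpose (X - Q) ** (X - Q)"
  using assms by (simp add: Stiefel_def matrix_algebra_simps algebra_simps)

lemma Bessel_Stiefel: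
  assumes "U \<in> Stiefel"
  shows "(norm (transpose U ** Y))\<^sup>2 \<le> (norm Y)\<^sup>2"
proof -
  let ?P = "U ** (transpose U ** Y)"
  have "0 \<le> (norm (Y - ?P))\<^sup>2" by simp
  also have "\<dots> = inner Y Y - 2 * inner Y ?P + inner ?P ?P"
    by (simp add: power2_norm_eq_inner inner_diff_left inner_diff_right inner_commute)
  also have "inner Y ?P = inner (transpose U ** Y) (transpose U ** Y)"
    by (subst inner_commute) (rule inner_matrix_mult_left)
  also have "inner ?P ?P = inner (transpose U ** Y) (transpose U ** Y)"
    using assms by (rule inner_Stiefel_mult)
  finally show ?thesis by (simp add: power2_norm_eq_inner)
qed

lemma Stiefel_cross_column_sum_le:
  fixes U W :: "real^'k^'d"
  assumes "U \<in> Stiefel" "W \<in> Stiefel"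
  shows "(\<Sum>i\<in>UNIV. ((transpose U ** W)$i$j)\<^sup>2) \<le> 1"
proof -
  define e where "e = diagm (\<lambda>l::'k. if l = j then (1::real) else 0)"
  have "(norm (transpose U ** (W ** e)))\<^sup>2 \<le> (norm (W ** e))\<^sup>2"
    using assms(1) by (rule Bessel_Stiefel)
  moreover have "(norm (transpose U ** (W ** e)))\<^sup>2 = (\<Sum>i\<in>UNIV. ((transpose U ** W)$i$j)\<^sup>2)"
    unfolding norm_matrix_sq matrix_mul_assoc e_def
    by (simp add: diagm_mult_right_nth power2_eq_square if_distrib if_distribR cong: if_cong)
  moreover have "(norm (W ** e))\<^sup>2 = (\<Sum>r\<in>UNIV. W$r$j * W$r$j)"
    unfolding norm_matrix_sq e_def
    by (simp add: diagm_mult_right_nth power2_eq_square if_distrib if_distribR cong: if_cong)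
  moreover have "(\<Sum>r\<in>UNIV. W$r$j * W$r$j) = 1"
    using assms(2) by (simp add: Stiefel_def mat_def vec_eq_iff matrix_mult_nth)
  ultimately show ?thesis by simp
qed

text \<open>The nearest points are the maximisers of the linear functional \<open>Z \<mapsto> \<langle>A, Z\<rangle>\<close>,
  since \<open>\<parallel>Z\<parallel>\<close> is constant on the Stiefel manifold.\<close>

lemma PSt_maximizes_inner:
  fixes A Y :: "real^'k^'d"
  assumes "Y \<in> PSt A" "Z \<in> Stiefel"
  shows "inner A Z \<le> inner A Y"
proof -
  have Y: "Y \<in> Stiefel" and "norm (A - Y) \<le> norm (A - Z)"
    using assms by (auto simp: PSt_def)
  then have "(norm (A - Y))\<^sup>2 \<le> (norm (A - Z))\<^sup>2" by (simp add: power_mono)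
  then show ?thesis
    using inner_self_Stiefel[OF Y] inner_self_Stiefel[OF assms(2)]
    by (simp add: power2_norm_eq_inner inner_diff_left inner_diff_right inner_commute)
qed

lemma inner_skew_self:
  fixes Om :: "real^'d^'d" and T :: "real^'k^'d"
  assumes "transpose Om = - Om"
  shows "inner T (Om ** T) = 0"
proof -
  have "inner T (Om ** T) = inner (Om ** T) T"
    by (rule inner_commute)
  also have "\<dots> = inner T (transpose Om ** T)"
    by (rule inner_matrix_mult_left)
  also have "\<dots> = - inner T (Om ** T)"
    by (simp add: assms matrix_algebra_simps)
  finally show ?thesis by simp
qed

lemma norm_le_norm_skew_shift:
  fixes Om :: "real^'d^'d" and T :: "real^'k^'d"
  assumes "transpose Om = - Om"
  shows "norm T \<le> norm (T - Om ** T)"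
proof -
  have "(norm (T - Om ** T))\<^sup>2 = (norm T)\<^sup>2 + (norm (Om ** T))\<^sup>2"
    using inner_skew_self[OF assms, of T]
    by (simp add: power2_norm_eq_inner inner_diff_left inner_diff_right inner_commute)
  then show ?thesis
    by (simp add: power2_le_imp_le)
qed

lemma skew_shift_surj:
  fixes Om :: "real^'d^'d"
  assumes "transpose Om = - Om"
  shows "surj (\<lambda>T::real^'k^'d. T - Om ** T)"
proof -
  have "linear (\<lambda>T::real^'k^'d. T - Om ** T)"
    by (rule linearI) (simp_all add: matrix_algebra_simps algebra_simps)
  moreover have "inj (\<lambda>T::real^'k^'d. T - Om ** T)"
  proof (rule injI)
    fix S T :: "real^'k^'d"
    assume eq: "S - Om ** S = T - Om ** T"
    have "(S - T) - Om ** (S - T) = (S - Om ** S) - (T - Om ** T)"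
      by (simp add: matrix_diff_ldistrib algebra_simps)
    then have "(S - T) - Om ** (S - T) = 0"
      by (simp add: eq)
    then show "S = T"
      using norm_le_norm_skew_shift[OF assms, of "S - T"] by simp
  qed
  ultimately show ?thesis
    by (simp add: linear_injective_imp_surjective)
qed

text \<open>\<open>X + T = (I - \<Omega>)\<inverse> (I + \<Omega>) X\<close> is the Cayley transform of \<open>X\<close>, an orthogonal
  image of \<open>X\<close> because \<open>\<Omega>\<close> is skew.\<close>

lemma Cayley_Stiefel:
  fixes Om :: "real^'d^'d" and X :: "real^'k^'d"
  assumes X: "X \<in> Stiefel" and skew: "transpose Om = - Om"
  obtains T where "T = Om ** (T + 2 *\<^sub>R X)" "X + T \<in> Stiefel" "norm T \<le> 2 * norm (Om ** X)"
proof -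
  obtain T where T: "T - Om ** T = 2 *\<^sub>R (Om ** X)"
    using skew_shift_surj[OF skew] by (metis surjD)
  define S where "S = T + 2 *\<^sub>R X"
  have "Om ** S = Om ** T + 2 *\<^sub>R (Om ** X)"
    by (simp add: S_def matrix_add_ldistrib matrix_scaleR_right)
  then have T_eq: "T = Om ** S"
    using T by (metis diff_eq_eq add.commute)
  have "transpose S ** T + transpose T ** S = transpose S ** (Om ** S) + transpose (Om ** S) ** S"
    using T_eq by metis
  also have "\<dots> = 0"
    by (simp add: matrix_algebra_simps skew)
  finally have skew_part: "transpose S ** T + transpose T ** S = 0" .
  have "transpose (X + T) ** (X + T)
      = transpose X ** X + (1/2) *\<^sub>R (transpose S ** T + transpose T ** S)"
    by (simp add: S_def matrix_algebra_simps algebra_simps)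
  then have "X + T \<in> Stiefel"
    using X skew_part by (simp add: Stiefel_def)
  moreover have "norm T \<le> 2 * norm (Om ** X)"
    using norm_le_norm_skew_shift[OF skew, of T] T by simp
  ultimately show thesis
    by (rule that[OF T_eq[unfolded S_def]])
qed

section \<open>The trace quadratic form\<close>

definition quad_form :: "real^'d^'d \<Rightarrow> real^'k^'k \<Rightarrow> real^'k^'d \<Rightarrow> real" where
  "quad_form M D X = inner X (M ** X ** D)"

lemma gfun_eq_quad_form:
  assumes "\<And>i. lam i \<ge> 0"
  shows "gfun Q lam a X = quad_form (Q ** diagm lam ** transpose Q) (diagm a) X"
  using assms by (simp add: gfun_def quad_form_def Theta_mult_Theta matrix_algebra_simps
      trace_transpose_mult)

lemma Aop_eq:
  assumes "\<And>i. lam i \<ge> 0"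
  shows "Aop \<alpha> Q lam a X = \<alpha> *\<^sub>R X + Q ** diagm lam ** transpose Q ** X ** diagm a"
  using assms by (simp add: Aop_def Theta_mult_Theta)

lemma inner_sym_form:
  fixes M :: "real^'d^'d" and D :: "real^'k^'k"
  assumes "transpose M = M" "transpose D = D"
  shows "inner E (M ** X ** D) = inner X (M ** E ** D)"
proof -
  have "inner E (M ** X ** D) = inner (M ** X ** D) E" by (rule inner_commute)
  also have "\<dots> = inner (M ** X) (E ** D)"
    using inner_matrix_mult_right[of "M ** X" D E] by (simp add: assms)
  also have "\<dots> = inner X (M ** E ** D)"
    by (simp add: inner_matrix_mult_left assms matrix_mul_assoc)
  finally show ?thesis .
qed

lemma quad_form_add:
  fixes M :: "real^'d^'d" and D :: "real^'k^'k"
  assumes "transpose M = M" "transpose D = D"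
  shows "quad_form M D (X + E) = quad_form M D X + 2 * inner E (M ** X ** D) + quad_form M D E"
  using inner_sym_form[OF assms, of E X]
  by (simp add: quad_form_def matrix_algebra_simps inner_add_left inner_add_right)

lemma quad_form_uminus: "quad_form M D (- E) = quad_form M D E"
  by (simp add: quad_form_def matrix_algebra_simps)

lemma quad_form_conj_diagm:
  "quad_form (Q ** diagm lam ** transpose Q) (diagm a) X
     = (\<Sum>i\<in>UNIV. \<Sum>j\<in>UNIV. lam i * a j * ((transpose Q ** X)$i$j)\<^sup>2)"
proof -
  have "quad_form (Q ** diagm lam ** transpose Q) (diagm a) X
      = inner (transpose Q ** X) (diagm lam ** (transpose Q ** X) ** diagm a)"
    by (simp add: quad_form_def inner_matrix_mult_left matrix_algebra_simps)
  then show ?thesis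
    by (simp add: inner_matrix diagm_mult_left_nth diagm_mult_right_nth power2_eq_square mult_ac)
qed

lemma quad_form_nonneg:
  assumes "\<And>i. lam i \<ge> 0" "\<And>i. a i \<ge> 0"
  shows "quad_form (Q ** diagm lam ** transpose Q) (diagm a) E \<ge> 0"
  unfolding quad_form_conj_diagm using assms by (intro sum_nonneg) auto

lemma quad_form_Stiefel_center:
  assumes "Q \<in> Stiefel"
  shows "quad_form (Q ** diagm lam ** transpose Q) (diagm a) Q = (\<Sum>i\<in>UNIV. lam i * a i)"
  using assms by (simp add: quad_form_conj_diagm Stiefel_def mat_def if_distrib if_distribR
      cong: if_cong)

section \<open>One step of the iteration\<close>

text \<open>Minorize--maximize: \<open>Y\<close> maximises \<open>\<langle>\<alpha> X + M X D, \<cdot>\<rangle>\<close> over the Stiefel manifold and the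
  form is positive semidefinite, so \<open>Y\<close> does at least as well as any competitor \<open>Z\<close> does for the
  linearisation of the form at \<open>X\<close>.\<close>

lemma PSt_quad_form_ascent:
  fixes M :: "real^'d^'d" and D :: "real^'k^'k"
  assumes sym: "transpose M = M" "transpose D = D"
    and psd: "\<And>E. quad_form M D E \<ge> 0" and \<alpha>: "\<alpha> \<ge> 0"
    and X: "X \<in> Stiefel" and Z: "Z \<in> Stiefel" and Y: "Y \<in> PSt (\<alpha> *\<^sub>R X + M ** X ** D)"
  shows "quad_form M D Y - quad_form M D X
           \<ge> 2 * inner (M ** X ** D) (Z - X) - \<alpha> * (norm (Z - X))\<^sup>2"
proof -
  let ?G = "M ** X ** D"
  have Y_St: "Y \<in> Stiefel"
    using Y by (simp add: PSt_def)
  have "inner (\<alpha> *\<^sub>R X + ?G) Z \<le> inner (\<alpha> *\<^sub>R X + ?G) Y"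
    using Y Z by (rule PSt_maximizes_inner)
  then have linear_gain: "inner ?G (Z - X) + \<alpha> * (inner X Z - inner X Y) \<le> inner ?G (Y - X)"
    by (simp add: inner_add_left inner_diff_right algebra_simps)
  have "(norm (Z - X))\<^sup>2 = 2 * real CARD('k) - 2 * inner X Z"
    using inner_self_Stiefel[OF X] inner_self_Stiefel[OF Z]
    by (simp add: power2_norm_eq_inner inner_diff_left inner_diff_right inner_commute)
  then have "inner X Z - inner X Y \<ge> - (norm (Z - X))\<^sup>2 / 2"
    using inner_Stiefel_le[OF X Y_St] by linarith
  then have "\<alpha> * (inner X Z - inner X Y) \<ge> \<alpha> * (- (norm (Z - X))\<^sup>2 / 2)"
    using \<alpha> by (rule mult_left_mono)
  moreover have "quad_form M D Y = quad_form M D X + 2 * inner ?G (Y - X) + quad_form M D (Y - X)"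
    using quad_form_add[OF sym, of X "Y - X"] by (simp add: inner_commute)
  ultimately show ?thesis
    using linear_gain psd[of "Y - X"] by linarith
qed

lemma Stiefel_tangent_skew_generator:
  fixes X V :: "real^'k^'d"
  assumes X: "X \<in> Stiefel" and tangent: "transpose X ** V + transpose V ** X = 0"
  obtains Om :: "real^'d^'d" where "transpose Om = - Om" "Om ** X = V"
    "norm Om \<le> 2 * (sqrt (real CARD('k)) * (1 + real CARD('k) / 2)) * norm V"
proof -
  define k where "k = real CARD('k)"
  have norm_X: "norm X = sqrt k" "norm (transpose X) = sqrt k"
    using X by (simp_all add: norm_transpose norm_Stiefel k_def)
  define W where "W = V - (1/2) *\<^sub>R (X ** (transpose X ** V))"
  define Om where "Om = W ** transpose X - X ** transpose W"
  have "transpose Om = - Om"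
    by (simp add: Om_def matrix_algebra_simps)
  moreover have "Om ** X = V - (1/2) *\<^sub>R (X ** (transpose X ** V + transpose V ** X))"
    using X by (simp add: Om_def W_def matrix_algebra_simps Stiefel_cancel algebra_simps
        matrix_times_two Stiefel_def)
  moreover have "norm Om \<le> 2 * (sqrt k * (1 + k/2)) * norm V"
  proof -
    have "norm (X ** (transpose X ** V)) \<le> k * norm V"
      using norm_matrix_mult3_le[of X "transpose X" V]
      by (simp add: norm_X matrix_mul_assoc k_def)
    then have "norm W \<le> (1 + k/2) * norm V"
      using norm_triangle_ineq4[of V "(1/2) *\<^sub>R (X ** (transpose X ** V))"]
      by (simp add: W_def algebra_simps)
    then have "2 * sqrt k * norm W \<le> 2 * sqrt k * ((1 + k/2) * norm V)"
      by (rule mult_left_mono) (simp add: k_def)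
    moreover have "norm Om \<le> 2 * sqrt k * norm W"
      using norm_triangle_ineq4[of "W ** transpose X" "X ** transpose W"]
        norm_matrix_mult_le[of W "transpose X"] norm_matrix_mult_le[of X "transpose W"]
      by (simp add: Om_def norm_X norm_transpose algebra_simps)
    moreover have "2 * sqrt k * ((1 + k/2) * norm V) = 2 * (sqrt k * (1 + k/2)) * norm V"
      by (simp only: mult_ac)
    ultimately show ?thesis
      by linarith
  qed
  ultimately show thesis
    using that tangent unfolding k_def by simp
qed

lemma Stiefel_tangent_retraction:
  fixes X V :: "real^'k^'d"
  assumes X: "X \<in> Stiefel" and tangent: "transpose X ** V + transpose V ** X = 0"
    and \<theta>: "0 \<le> \<theta>"
  obtains R where "X + \<theta> *\<^sub>R V + R \<in> Stiefel" "norm (\<theta> *\<^sub>R V + R) \<le> \<theta> * norm V"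
    "norm R \<le> \<theta>\<^sup>2 * (sqrt (real CARD('k)) * (1 + real CARD('k) / 2)) * (norm V)\<^sup>2"
proof -
  define c where "c = sqrt (real CARD('k)) * (1 + real CARD('k) / 2)"
  obtain Om where skew: "transpose Om = - Om" and Om_X: "Om ** X = V" and Om: "norm Om \<le> 2 * c * norm V"
    using Stiefel_tangent_skew_generator[OF X tangent] unfolding c_def by blast
  let ?Om = "(\<theta> / 2) *\<^sub>R Om"
  obtain T where T: "T = ?Om ** (T + 2 *\<^sub>R X)" "X + T \<in> Stiefel" "norm T \<le> 2 * norm (?Om ** X)"
    using Cayley_Stiefel[OF X, of ?Om] skew by (auto simp: transpose_scalar)
  define R where "R = ?Om ** T"
  have "?Om ** (T + 2 *\<^sub>R X) = \<theta> *\<^sub>R V + R"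
    by (simp add: R_def Om_X matrix_algebra_simps add.commute)
  then have T_eq: "T = \<theta> *\<^sub>R V + R"
    using T(1) by metis
  have norm_T: "norm T \<le> \<theta> * norm V"
    using T(3) \<theta> by (simp add: matrix_scaleR_left Om_X)
  have "norm R \<le> (\<theta> / 2 * (2 * c * norm V)) * (\<theta> * norm V)"
    unfolding R_def using norm_matrix_mult_le[of ?Om T] Om norm_T \<theta>
    by (smt (verit) mult_left_mono mult_mono norm_ge_zero norm_scaleR zero_le_divide_iff)
  then have "norm R \<le> \<theta>\<^sup>2 * c * (norm V)\<^sup>2"
    by (simp add: power2_eq_square mult_ac)
  then show thesis
    using that T(2) norm_T unfolding T_eq c_def by (simp add: add.assoc)
qed

text \<open>The orthogonal projection of \<open>Q - X\<close> onto the tangent space of the Stiefel manifold at \<open>X\<close>.\<close>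

definition tangent_toward :: "real^'k^'d \<Rightarrow> real^'k^'d \<Rightarrow> real^'k^'d" where
  "tangent_toward Q X = (Q - X) + (1/2) *\<^sub>R (X ** (transpose (X - Q) ** (X - Q)))"

lemma tangent_toward_tangent:
  assumes "Q \<in> Stiefel" "X \<in> Stiefel"
  shows "transpose X ** tangent_toward Q X + transpose (tangent_toward Q X) ** X = 0"
proof -
  have "transpose X ** tangent_toward Q X + transpose (tangent_toward Q X) ** X
      = transpose (X - Q) ** (X - Q) - (transpose X ** (X - Q) + transpose (X - Q) ** X)"
    using assms(2)
    by (simp add: tangent_toward_def matrix_algebra_simps Stiefel_cancel Stiefel_def algebra_simps
        matrix_times_two)
  then show ?thesis
    using Stiefel_diff_relation[OF assms] by simp
qed

lemma norm_tangent_toward_le: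
  fixes Q X :: "real^'k^'d"
  assumes "X \<in> Stiefel" "norm (X - Q) \<le> 1"
  shows "norm (tangent_toward Q X) \<le> (1 + sqrt (real CARD('k))) * norm (X - Q)"
proof -
  let ?E = "X - Q"
  have "norm (X ** (transpose ?E ** ?E)) \<le> sqrt (real CARD('k)) * (norm ?E * norm ?E)"
    using norm_matrix_mult3_le[of X "transpose ?E" ?E] assms(1)
    by (simp add: norm_Stiefel norm_transpose matrix_mul_assoc mult.assoc)
  also have "\<dots> \<le> sqrt (real CARD('k)) * norm ?E"
    using assms(2) by (simp add: mult_left_le)
  finally have "norm (X ** (transpose ?E ** ?E)) \<le> sqrt (real CARD('k)) * norm ?E" .
  moreover have "norm (tangent_toward Q X) \<le> norm ?E + (1/2) * norm (X ** (transpose ?E ** ?E))"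
    using norm_triangle_ineq[of "Q - X" "(1/2) *\<^sub>R (X ** (transpose ?E ** ?E))"]
    by (simp add: tangent_toward_def norm_minus_commute)
  moreover have "0 \<le> sqrt (real CARD('k)) * norm ?E"
    by simp
  ultimately have "norm (tangent_toward Q X) \<le> norm ?E + sqrt (real CARD('k)) * norm ?E"
    by linarith
  then show ?thesis
    by (simp add: algebra_simps)
qed

text \<open>Second-order expansion of the form at \<open>Q\<close>; on the Stiefel manifold the first-order term
  \<open>2\<langle>E, M Q D\<rangle>\<close> is itself quadratic in \<open>E = X - Q\<close>.\<close>

lemma quad_form_Stiefel_expansion:
  fixes Q X :: "real^'k^'d" and lam a :: "'k \<Rightarrow> real"
  defines "M \<equiv> Q ** diagm lam ** transpose Q" and "D \<equiv> diagm a" and "E \<equiv> X - Q"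
  assumes Q: "Q \<in> Stiefel" and X: "X \<in> Stiefel"
  shows "quad_form M D X = quad_form M D Q - inner (transpose E ** E) (diagm lam ** D) + quad_form M D E"
proof -
  define L where "L = diagm lam ** D"
  have sym: "transpose M = M" "transpose D = D" "transpose L = L"
    by (simp_all add: M_def D_def L_def matrix_algebra_simps diagm_mult_diagm mult.commute)
  have "inner E (M ** Q ** D) = inner (transpose Q ** E) L"
    using Q by (simp add: M_def L_def matrix_algebra_simps Stiefel_cancel inner_commute[of E]
        inner_matrix_mult_left)
  moreover have "inner (transpose Q ** E) L = inner (transpose E ** Q) L"
    using inner_transpose[of "transpose E ** Q" L] by (simp add: sym matrix_algebra_simps)
  ultimately have "2 * inner E (M ** Q ** D) = inner (transpose Q ** E + transpose E ** Q) L"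
    by (simp add: inner_add_left)
  also have "transpose Q ** E + transpose E ** Q = - (transpose E ** E)"
    using Q X by (simp add: E_def Stiefel_def matrix_algebra_simps algebra_simps)
  finally show ?thesis
    using quad_form_add[OF sym(1,2), of Q E] by (simp add: E_def L_def)
qed

lemma inner_tangent_toward:
  fixes Q X :: "real^'k^'d" and lam a :: "'k \<Rightarrow> real"
  defines "M \<equiv> Q ** diagm lam ** transpose Q"
  assumes Q: "Q \<in> Stiefel" and X: "X \<in> Stiefel"
  shows "2 * inner (M ** X ** diagm a) (tangent_toward Q X)
       = 2 * (quad_form M (diagm a) Q - quad_form M (diagm a) X)
         + inner (transpose X ** M ** X ** diagm a - diagm lam ** diagm a)
             (transpose (X - Q) ** (X - Q))"
proof -
  define D where "D = diagm a"
  define E where "E = X - Q"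
  define G where "G = M ** X ** D"
  have sym: "transpose M = M" "transpose D = D"
    by (simp_all add: M_def D_def matrix_algebra_simps)
  have "quad_form M D Q = quad_form M D (X + (- E))"
    by (simp add: E_def)
  also have "\<dots> = quad_form M D X - 2 * inner E G + quad_form M D E"
    using quad_form_add[OF sym, of X "- E"] by (simp add: quad_form_uminus G_def)
  finally have Q_from_X: "quad_form M D Q = quad_form M D X - 2 * inner E G + quad_form M D E" .
  have X_from_Q: "quad_form M D X = quad_form M D Q - inner (transpose E ** E) (diagm lam ** D)
      + quad_form M D E"
    unfolding M_def D_def E_def using Q X by (rule quad_form_Stiefel_expansion)
  have "inner G (X ** (transpose E ** E)) = inner (X ** (transpose E ** E)) G"
    by (rule inner_commute)
  also have "\<dots> = inner (transpose E ** E) (transpose X ** G)"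
    by (rule inner_matrix_mult_left)
  also have "\<dots> = inner (transpose X ** G) (transpose E ** E)"
    by (rule inner_commute)
  finally have "inner G (X ** (transpose E ** E)) = inner (transpose X ** G) (transpose E ** E)" .
  moreover have "tangent_toward Q X = - E + (1/2) *\<^sub>R (X ** (transpose E ** E))"
    by (simp add: tangent_toward_def E_def)
  ultimately have gain: "2 * inner G (tangent_toward Q X)
      = - 2 * inner E G + inner (transpose X ** G) (transpose E ** E)"
    by (simp add: inner_diff_right inner_commute[of G E])
  have defect: "inner (transpose X ** M ** X ** D - diagm lam ** D) (transpose E ** E)
      = inner (transpose X ** G) (transpose E ** E) - inner (transpose E ** E) (diagm lam ** D)"
    by (simp add: G_def matrix_mul_assoc inner_diff_left inner_commute[of "diagm lam ** D"])
  have "2 * inner G (tangent_toward Q X) = 2 * (quad_form M D Q - quad_form M D X)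
      + inner (transpose X ** M ** X ** D - diagm lam ** D) (transpose E ** E)"
    using gain defect Q_from_X X_from_Q by argo
  then show ?thesis
    by (simp only: G_def D_def E_def)
qed

lemma norm_curvature_defect_le:
  fixes Q X :: "real^'k^'d" and lam :: "'k \<Rightarrow> real" and D :: "real^'k^'k"
  defines "M \<equiv> Q ** diagm lam ** transpose Q"
  assumes Q: "Q \<in> Stiefel" and X: "X \<in> Stiefel"
  shows "norm (transpose X ** M ** X ** D - diagm lam ** D)
           \<le> 2 * sqrt (real CARD('k)) * norm M * norm (X - Q) * norm D"
proof -
  let ?E = "X - Q"
  let ?F = "transpose ?E ** (M ** X) + transpose Q ** (M ** ?E)"
  have "transpose X ** M ** X - diagm lam = ?F"
    using Q by (simp add: M_def matrix_algebra_simps Stiefel_cancel Stiefel_def algebra_simps)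
  then have "transpose X ** M ** X ** D - diagm lam ** D = ?F ** D"
    by (metis matrix_diff_rdistrib)
  then have defect_le: "norm (transpose X ** M ** X ** D - diagm lam ** D) \<le> norm ?F * norm D"
    by (simp add: norm_matrix_mult_le)
  have F_le: "norm ?F \<le> 2 * sqrt (real CARD('k)) * norm M * norm ?E"
  proof -
    have "norm (transpose ?E ** (M ** X)) \<le> norm ?E * norm M * sqrt (real CARD('k))"
      using norm_matrix_mult3_le[of "transpose ?E" M X] X
      by (simp add: norm_transpose norm_Stiefel matrix_mul_assoc)
    then have "norm (transpose ?E ** (M ** X)) \<le> sqrt (real CARD('k)) * norm M * norm ?E"
      by (simp only: mult_ac)
    moreover have "norm (transpose Q ** (M ** ?E)) \<le> sqrt (real CARD('k)) * norm M * norm ?E"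
      using norm_matrix_mult3_le[of "transpose Q" M ?E] Q
      by (simp add: norm_transpose norm_Stiefel matrix_mul_assoc)
    ultimately show ?thesis
      using norm_triangle_ineq[of "transpose ?E ** (M ** X)" "transpose Q ** (M ** ?E)"]
      by linarith
  qed
  show ?thesis
    using order_trans[OF defect_le mult_right_mono[OF F_le norm_ge_zero]] .
qed

lemma inner_tangent_toward_ge:
  fixes Q X :: "real^'k^'d" and lam a :: "'k \<Rightarrow> real"
  defines "M \<equiv> Q ** diagm lam ** transpose Q" and "D \<equiv> diagm a"
  assumes Q: "Q \<in> Stiefel" and X: "X \<in> Stiefel"
  shows "2 * inner (M ** X ** D) (tangent_toward Q X)
           \<ge> 2 * (quad_form M D Q - quad_form M D X)
             - 2 * sqrt (real CARD('k)) * norm M * norm D * norm (X - Q) ^ 3"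
proof -
  let ?E = "X - Q"
  let ?defect = "transpose X ** M ** X ** D - diagm lam ** D"
  have "norm (transpose ?E ** ?E) \<le> norm ?E * norm ?E"
    using norm_matrix_mult_le[of "transpose ?E" ?E] by (simp add: norm_transpose)
  then have "norm ?defect * norm (transpose ?E ** ?E)
      \<le> (2 * sqrt (real CARD('k)) * norm M * norm ?E * norm D) * (norm ?E * norm ?E)"
    using norm_curvature_defect_le[OF Q X, of lam D] unfolding M_def
    by (intro mult_mono) simp_all
  also have "\<dots> = 2 * sqrt (real CARD('k)) * norm M * norm D * norm ?E ^ 3"
    by (simp add: power3_eq_cube mult_ac)
  finally have "\<bar>inner ?defect (transpose ?E ** ?E)\<bar>
      \<le> 2 * sqrt (real CARD('k)) * norm M * norm D * norm ?E ^ 3"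
    using Cauchy_Schwarz_ineq2[of ?defect "transpose ?E ** ?E"] by linarith
  then show ?thesis
    using inner_tangent_toward[OF Q X, of lam a] unfolding M_def D_def by linarith
qed

lemma PSt_ascent_along_retraction:
  fixes M :: "real^'d^'d" and D :: "real^'k^'k"
  assumes sym: "transpose M = M" "transpose D = D"
    and psd: "\<And>E. quad_form M D E \<ge> 0" and \<alpha>: "\<alpha> \<ge> 0"
    and X: "X \<in> Stiefel" and Z: "X + \<theta> *\<^sub>R V + R \<in> Stiefel"
    and step: "norm (\<theta> *\<^sub>R V + R) \<le> \<theta> * norm V" and R: "norm R \<le> \<theta>\<^sup>2 * c * (norm V)\<^sup>2"
    and G: "norm (M ** X ** D) \<le> g" and Y: "Y \<in> PSt (\<alpha> *\<^sub>R X + M ** X ** D)"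
  shows "quad_form M D Y - quad_form M D X
           \<ge> \<theta> * (2 * inner (M ** X ** D) V) - \<theta>\<^sup>2 * (2 * g * c + \<alpha>) * (norm V)\<^sup>2"
proof -
  let ?G = "M ** X ** D"
  have "quad_form M D Y - quad_form M D X
      \<ge> 2 * inner ?G (\<theta> *\<^sub>R V + R) - \<alpha> * (norm (\<theta> *\<^sub>R V + R))\<^sup>2"
    using PSt_quad_form_ascent[OF sym psd \<alpha> X Z Y] by (simp add: add.assoc)
  moreover have "2 * inner ?G (\<theta> *\<^sub>R V + R) = \<theta> * (2 * inner ?G V) + 2 * inner ?G R"
    by (simp add: inner_add_right algebra_simps)
  moreover have "norm ?G * norm R \<le> g * (\<theta>\<^sup>2 * c * (norm V)\<^sup>2)"
    using G R by (intro mult_mono) (auto intro: order_trans[OF norm_ge_zero])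
  moreover have "\<alpha> * (norm (\<theta> *\<^sub>R V + R))\<^sup>2 \<le> \<alpha> * (\<theta>\<^sup>2 * (norm V)\<^sup>2)"
    using mult_left_mono[OF power_mono[OF step norm_ge_zero, of 2] \<alpha>]
    by (simp add: power_mult_distrib)
  moreover have "\<theta>\<^sup>2 * (2 * g * c + \<alpha>) * (norm V)\<^sup>2
      = 2 * (g * (\<theta>\<^sup>2 * c * (norm V)\<^sup>2)) + \<alpha> * (\<theta>\<^sup>2 * (norm V)\<^sup>2)"
    by (simp add: algebra_simps)
  ultimately show ?thesis
    using Cauchy_Schwarz_ineq2[of ?G R] by linarith
qed

text \<open>Compare \<open>Y\<close> with the retraction of \<open>X + \<theta> V\<close>, \<open>V = tangent_toward Q X\<close>: the first-order gain is
  \<open>2\<theta>\<close> times the optimality gap, up to errors cubic in \<open>\<parallel>X - Q\<parallel>\<close> and quadratic in \<open>\<theta>\<close>.\<close>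

lemma quad_form_local_ascent:
  fixes Q X Y :: "real^'k^'d" and lam a :: "'k \<Rightarrow> real"
  defines "M \<equiv> Q ** diagm lam ** transpose Q" and "D \<equiv> diagm a" and "k \<equiv> real CARD('k)"
  assumes Q: "Q \<in> Stiefel" and X: "X \<in> Stiefel"
    and lam: "\<And>i. lam i \<ge> 0" and a: "\<And>i. a i \<ge> 0"
    and Y: "Y \<in> PSt (\<alpha> *\<^sub>R X + M ** X ** D)" and \<alpha>: "\<alpha> \<ge> 0"
    and \<theta>: "0 \<le> \<theta>" and near: "norm (X - Q) \<le> 1"
  shows "quad_form M D Y - quad_form M D X
           \<ge> 2 * \<theta> * (quad_form M D Q - quad_form M D X)
             - \<theta> * (2 * sqrt k * norm M * norm D) * norm (X - Q) ^ 3
             - \<theta>\<^sup>2 * ((2 * (norm M * sqrt k * norm D) * (sqrt k * (1 + k/2)) + \<alpha>) * (1 + sqrt k)\<^sup>2)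
                 * (norm (X - Q))\<^sup>2"
proof -
  define V where "V = tangent_toward Q X"
  define C where "C = 2 * (norm M * sqrt k * norm D) * (sqrt k * (1 + k/2)) + \<alpha>"
  obtain R where Z: "X + \<theta> *\<^sub>R V + R \<in> Stiefel" and step: "norm (\<theta> *\<^sub>R V + R) \<le> \<theta> * norm V"
    and R: "norm R \<le> \<theta>\<^sup>2 * (sqrt k * (1 + k/2)) * (norm V)\<^sup>2"
    using Stiefel_tangent_retraction[OF X tangent_toward_tangent[OF Q X] \<theta>]
    unfolding V_def k_def by blast
  have sym: "transpose M = M" "transpose D = D"
    by (simp_all add: M_def D_def matrix_algebra_simps)
  have psd: "quad_form M D E \<ge> 0" for E
    unfolding M_def D_def using lam a by (rule quad_form_nonneg)
  have "norm (M ** X ** D) \<le> norm M * sqrt k * norm D"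
    using norm_matrix_mult3_le[of M X D] X by (simp add: norm_Stiefel k_def)
  from PSt_ascent_along_retraction[OF sym psd \<alpha> X Z step R this Y]
  have "quad_form M D Y - quad_form M D X \<ge> \<theta> * (2 * inner (M ** X ** D) V) - \<theta>\<^sup>2 * C * (norm V)\<^sup>2"
    by (simp add: C_def)
  moreover have "\<theta> * (2 * inner (M ** X ** D) V) \<ge> 2 * \<theta> * (quad_form M D Q - quad_form M D X)
      - \<theta> * (2 * sqrt k * norm M * norm D) * norm (X - Q) ^ 3"
    using mult_left_mono[OF inner_tangent_toward_ge[OF Q X, of lam a] \<theta>]
    by (simp add: M_def D_def V_def k_def algebra_simps)
  moreover have "\<theta>\<^sup>2 * C * (norm V)\<^sup>2 \<le> \<theta>\<^sup>2 * (C * (1 + sqrt k)\<^sup>2) * (norm (X - Q))\<^sup>2"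
  proof -
    have "(norm V)\<^sup>2 \<le> ((1 + sqrt k) * norm (X - Q))\<^sup>2"
      using norm_tangent_toward_le[OF X near] unfolding V_def k_def
      by (intro power_mono) simp_all
    moreover have "C \<ge> 0"
      using \<alpha> by (simp add: C_def k_def)
    ultimately show ?thesis
      by (simp add: mult_left_mono power_mult_distrib mult.assoc)
  qed
  ultimately show ?thesis
    unfolding C_def[symmetric] by linarith
qed

section \<open>Distance to the signed copies of \<open>Q\<close>\<close>

lemma finite_sign_vectors: "finite {q::'k::finite \<Rightarrow> real. \<forall>i. q i \<in> {1, -1}}"
proof -
  have "{q::'k \<Rightarrow> real. \<forall>i. q i \<in> {1, -1}} = PiE UNIV (\<lambda>_. {1, -1})"
    by (auto simp: PiE_def extensional_def Pi_def)
  then show ?thesis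
    by (simp add: finite_PiE)
qed

lemma dF_eq_Min_image:
  "dF X Q = Min ((\<lambda>q. norm (X - Q ** diagm q)) ` {q. \<forall>i. q i \<in> {1, -1}})"
  unfolding dF_def by (simp add: setcompr_eq_image)

lemma dF_le:
  assumes "\<forall>i. q i \<in> {1, -1}"
  shows "dF X Q \<le> norm (X - Q ** diagm q)"
  unfolding dF_eq_Min_image using assms by (intro Min_le finite_imageI finite_sign_vectors) auto

lemma dF_attained:
  fixes X Q :: "real^'k^'d"
  obtains q where "\<forall>i. q i \<in> {1, -1}" "dF X Q = norm (X - Q ** diagm q)"
proof -
  have "(\<lambda>_. 1) \<in> {q::'k \<Rightarrow> real. \<forall>i. q i \<in> {1, -1}}"
    by simp
  then have "(\<lambda>q. norm (X - Q ** diagm q)) ` {q. \<forall>i. q i \<in> {1, -1}} \<noteq> {}"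
    by (metis empty_iff image_is_empty)
  then have "dF X Q \<in> (\<lambda>q. norm (X - Q ** diagm q)) ` {q. \<forall>i. q i \<in> {1, -1}}"
    unfolding dF_eq_Min_image using finite_sign_vectors by (intro Min_in finite_imageI)
  then show thesis
    by (rule imageE) (simp add: that)
qed

lemma dF_nonneg: "dF X Q \<ge> 0"
proof -
  obtain q where "dF X Q = norm (X - Q ** diagm q)"
    using dF_attained by blast
  then show ?thesis
    by simp
qed

lemma conj_diagm_signs:
  fixes Q :: "real^'k^'d" and q lam :: "'k \<Rightarrow> real"
  assumes "\<forall>i. q i \<in> {1, -1}"
  shows "(Q ** diagm q) ** diagm lam ** transpose (Q ** diagm q) = Q ** diagm lam ** transpose Q"
proof -
  have "(\<lambda>i. q i * (lam i * q i)) = lam"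
  proof
    show "q i * (lam i * q i) = lam i" for i
      using assms by (cases "q i = 1") auto
  qed
  then have "diagm q ** (diagm lam ** diagm q) = diagm lam"
    by (simp add: diagm_mult_diagm)
  then have "diagm q ** (diagm lam ** (diagm q ** B)) = diagm lam ** B" for B :: "real^'d^'k"
    by (simp add: matrix_mul_assoc)
  then show ?thesis
    by (simp add: matrix_algebra_simps)
qed

lemma nearest_signed_copy:
  fixes Q X :: "real^'k^'d" and lam a :: "'k \<Rightarrow> real"
  assumes Q: "Q \<in> Stiefel"
  obtains Q' where "Q' \<in> Stiefel" "dF X Q = norm (X - Q')"
    "Q' ** diagm lam ** transpose Q' = Q ** diagm lam ** transpose Q"
    "quad_form (Q ** diagm lam ** transpose Q) (diagm a) Q'
       = quad_form (Q ** diagm lam ** transpose Q) (diagm a) Q"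
proof -
  obtain q where q: "\<forall>i. q i \<in> {1, -1}" and dF_eq: "dF X Q = norm (X - Q ** diagm q)"
    using dF_attained by blast
  have Q': "Q ** diagm q \<in> Stiefel"
    using Q q by (rule Stiefel_mult_signs)
  have M': "(Q ** diagm q) ** diagm lam ** transpose (Q ** diagm q) = Q ** diagm lam ** transpose Q"
    using q by (rule conj_diagm_signs)
  show thesis
  proof (rule that[OF Q' dF_eq M'])
    show "quad_form (Q ** diagm lam ** transpose Q) (diagm a) (Q ** diagm q)
        = quad_form (Q ** diagm lam ** transpose Q) (diagm a) Q"
      using quad_form_Stiefel_center[OF Q', of lam a] quad_form_Stiefel_center[OF Q, of lam a]
      by (simp add: M')
  qed
qed

section \<open>Quadratic growth\<close>

text \<open>The increment from \<open>b q\<close> to \<open>b p\<close> of the piecewise linear function whose slope on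
  \<open>[b (Suc r), b r]\<close> is the average of \<open>l (Suc r)\<close> and \<open>l r\<close>.\<close>

definition midpoint_sum :: "(nat \<Rightarrow> real) \<Rightarrow> (nat \<Rightarrow> real) \<Rightarrow> nat \<Rightarrow> nat \<Rightarrow> real" where
  "midpoint_sum l b p q = (\<Sum>r = p..<q. (l r + l (Suc r)) / 2 * (b r - b (Suc r)))"

lemma sum_telescope_atLeastLessThan:
  fixes f :: "nat \<Rightarrow> real"
  assumes "p \<le> q"
  shows "(\<Sum>r = p..<q. f r - f (Suc r)) = f p - f q"
  using sum_Suc_diff'[OF assms, of "\<lambda>r. - f r"] by (simp add: sum_negf)

lemma midpoint_sum_split:
  assumes "p \<le> q" "q \<le> N"
  shows "midpoint_sum l b p N - midpoint_sum l b q N = midpoint_sum l b p q"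
  unfolding midpoint_sum_def using assms
  by (simp add: sum.atLeastLessThan_concat[symmetric, of p q N])

context
  fixes l b :: "nat \<Rightarrow> real" and N :: nat
  assumes l_dec: "\<And>p q. p < q \<Longrightarrow> q \<le> N \<Longrightarrow> l q < l p"
    and b_dec: "\<And>p q. p < q \<Longrightarrow> q \<le> N \<Longrightarrow> b q < b p"
begin

lemma midpoint_sum_upper:
  assumes "p < q" "q \<le> N"
  shows "midpoint_sum l b p q \<le> l p * (b p - b q) - (l p - l (Suc p)) * (b p - b (Suc p)) / 2"
proof -
  have "l p * (b p - b q) = (\<Sum>r = p..<q. l p * (b r - b (Suc r)))"
    unfolding sum_telescope_atLeastLessThan[of p q b, symmetric, OF less_imp_le[OF assms(1)]]
    by (rule sum_distrib_left)
  then have "l p * (b p - b q) - midpoint_sum l b p q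
      = (\<Sum>r = p..<q. (l p - (l r + l (Suc r)) / 2) * (b r - b (Suc r)))"
    unfolding midpoint_sum_def by (simp add: left_diff_distrib sum_subtractf)
  moreover have "(l p - (l p + l (Suc p)) / 2) * (b p - b (Suc p))
      \<le> (\<Sum>r = p..<q. (l p - (l r + l (Suc r)) / 2) * (b r - b (Suc r)))"
  proof (rule member_le_sum)
    fix r assume r: "r \<in> {p..<q} - {p}"
    then have "l (Suc r) < l r" "l r < l p" "b (Suc r) < b r"
      using assms l_dec b_dec by auto
    then show "0 \<le> (l p - (l r + l (Suc r)) / 2) * (b r - b (Suc r))"
      by simp
  qed (use assms in auto)
  ultimately show ?thesis
    by (simp add: field_simps)
qed

lemma midpoint_sum_lower:
  assumes "p \<le> s" "Suc s \<le> N"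
  shows "midpoint_sum l b p (Suc s)
           \<ge> l (Suc s) * (b p - b (Suc s)) + (l s - l (Suc s)) * (b s - b (Suc s)) / 2"
proof -
  have "l (Suc s) * (b p - b (Suc s)) = (\<Sum>r = p..<Suc s. l (Suc s) * (b r - b (Suc r)))"
    unfolding sum_telescope_atLeastLessThan[of p "Suc s" b, symmetric, OF le_SucI[OF assms(1)]]
    by (rule sum_distrib_left)
  then have "midpoint_sum l b p (Suc s) - l (Suc s) * (b p - b (Suc s))
      = (\<Sum>r = p..<Suc s. ((l r + l (Suc r)) / 2 - l (Suc s)) * (b r - b (Suc r)))"
    unfolding midpoint_sum_def by (simp add: left_diff_distrib sum_subtractf)
  moreover have "((l s + l (Suc s)) / 2 - l (Suc s)) * (b s - b (Suc s))
      \<le> (\<Sum>r = p..<Suc s. ((l r + l (Suc r)) / 2 - l (Suc s)) * (b r - b (Suc r)))"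
  proof (rule member_le_sum)
    fix r assume r: "r \<in> {p..<Suc s} - {s}"
    then have "l (Suc s) < l (Suc r)" "l (Suc r) < l r" "b (Suc r) < b r"
      using assms l_dec b_dec by auto
    then show "0 \<le> ((l r + l (Suc r)) / 2 - l (Suc s)) * (b r - b (Suc r))"
      by simp
  qed (use assms in auto)
  ultimately show ?thesis
    by (simp add: field_simps)
qed

lemma separating_potentials_nat:
  obtains c V where "c > 0"
    "\<And>p q. p < q \<Longrightarrow> q \<le> N \<Longrightarrow>
       l q * (b p - b q) + c \<le> V p - V q \<and> V p - V q \<le> l p * (b p - b q) - c"
proof -
  define gap where "gap r = (l r - l (Suc r)) * (b r - b (Suc r)) / 2" for r
  define c where "c = Min (insert 1 (gap ` {..<N}))"
  have gap_pos: "gap r > 0" if "r < N" for r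
    using l_dec[of r "Suc r"] b_dec[of r "Suc r"] that by (simp add: gap_def)
  have c_pos: "c > 0"
    unfolding c_def using gap_pos by (subst Min_gr_iff) auto
  have c_le: "c \<le> gap r" if "r < N" for r
    unfolding c_def using that by (intro Min_le) auto
  show thesis
  proof (rule that[OF c_pos])
    fix p q assume pq: "p < q" "q \<le> N"
    obtain s where s: "q = Suc s"
      using pq by (cases q) auto
    have "midpoint_sum l b p N - midpoint_sum l b q N = midpoint_sum l b p q"
      using pq by (intro midpoint_sum_split) auto
    moreover have "midpoint_sum l b p q \<le> l p * (b p - b q) - gap p"
      using midpoint_sum_upper[OF pq] by (simp add: gap_def)
    moreover have "midpoint_sum l b p q \<ge> l q * (b p - b q) + gap s"
      using midpoint_sum_lower[of p s] pq unfolding s gap_def by simp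
    moreover have "c \<le> gap p" "c \<le> gap s"
      using pq s by (auto intro: c_le)
    ultimately show "l q * (b p - b q) + c \<le> midpoint_sum l b p N - midpoint_sum l b q N
        \<and> midpoint_sum l b p N - midpoint_sum l b q N \<le> l p * (b p - b q) - c"
      by linarith
  qed
qed

end

lemma finite_linorder_enumeration:
  obtains ix :: "'k::{finite,linorder} \<Rightarrow> nat" and n :: nat and e :: "nat \<Rightarrow> 'k"
  where "\<And>i. ix i < n" "\<And>i. e (ix i) = i" "\<And>p q. p < q \<Longrightarrow> q < n \<Longrightarrow> e p < e q"
proof -
  obtain xs :: "'k list" where xs: "sorted_wrt (<) xs" "set xs = UNIV"
    using ex1_sorted_list_for_set_if_finite[of "UNIV :: 'k set"] by auto
  have ex_index: "\<exists>p<length xs. xs ! p = i" for i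
    using xs(2) by (metis UNIV_I in_set_conv_nth)
  define ix where "ix i = (SOME p. p < length xs \<and> xs ! p = i)" for i
  have "ix i < length xs" "xs ! ix i = i" for i
    using someI_ex[OF ex_index[of i]] by (auto simp: ix_def)
  moreover have "xs ! p < xs ! q" if "p < q" "q < length xs" for p q
    using sorted_wrt_nth_less[OF xs(1)] that by simp
  ultimately show thesis
    by (rule that)
qed

text \<open>Padding \<open>l\<close> and \<open>b\<close> with a fictitious last value \<open>0\<close> turns \<open>u \<ge> 0\<close> and \<open>v \<ge> c\<close> into
  separation conditions against that extra index.\<close>

lemma separating_potentials:
  fixes lam a :: "'k::{finite,linorder} \<Rightarrow> real"
  assumes lam_dec: "\<And>i j. i < j \<Longrightarrow> lam i > lam j" and lam_pos: "\<And>i. lam i > 0"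
    and a_dec: "\<And>i j. i < j \<Longrightarrow> a i > a j" and a_pos: "\<And>i. a i > 0"
  obtains c u v where "c > 0" "\<And>i. u i \<ge> 0" "\<And>j. v j \<ge> c" "\<And>i. u i + v i = lam i * a i"
    "\<And>i j. i \<noteq> j \<Longrightarrow> lam i * a j + c \<le> u i + v j"
proof -
  obtain ix n and e :: "nat \<Rightarrow> 'k"
    where ix: "\<And>i. ix i < n" "\<And>i. e (ix i) = i" and e_less: "\<And>p q. p < q \<Longrightarrow> q < n \<Longrightarrow> e p < e q"
    by (rule finite_linorder_enumeration) blast
  define l where "l p = (if p < n then lam (e p) else 0)" for p
  define b where "b p = (if p < n then a (e p) else 0)" for p
  have "l q < l p" "b q < b p" if "p < q" "q \<le> n" for p q
    using that lam_dec[OF e_less] a_dec[OF e_less] lam_pos a_pos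
    by (auto simp: l_def b_def)
  then obtain c V where c: "c > 0" and V: "\<And>p q. p < q \<Longrightarrow> q \<le> n \<Longrightarrow>
      l q * (b p - b q) + c \<le> V p - V q \<and> V p - V q \<le> l p * (b p - b q) - c"
    using separating_potentials_nat[of n l b] by blast
  define v where "v i = V (ix i) - V n" for i
  define u where "u i = lam i * a i - v i" for i
  have lb: "l (ix i) = lam i" "b (ix i) = a i" "l n = 0" "b n = 0" for i
    using ix by (simp_all add: l_def b_def)
  have v_bounds: "c \<le> v j \<and> v j \<le> lam j * a j - c" for j
    using V[OF ix(1) order_refl, of j] by (simp add: v_def lb)
  show thesis
  proof (rule that[OF c])
    show "v j \<ge> c" "u j \<ge> 0" for j
      using v_bounds[of j] c by (simp_all add: u_def)
    show "u i + v i = lam i * a i" for i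
      by (simp add: u_def)
  next
    fix i j :: 'k
    assume "i \<noteq> j"
    then have "ix i \<noteq> ix j"
      using ix(2) by metis
    then consider "ix i < ix j" | "ix j < ix i"
      by linarith
    then show "lam i * a j + c \<le> u i + v j"
    proof cases
      case 1
      then show ?thesis
        using V[OF 1 less_imp_le[OF ix(1)]] by (simp add: u_def v_def lb algebra_simps)
    next
      case 2
      then show ?thesis
        using V[OF 2 less_imp_le[OF ix(1)]] by (simp add: u_def v_def lb algebra_simps)
    qed
  qed
qed

text \<open>Weak duality for the assignment-type linear program over doubly substochastic \<open>P\<close>, with an
  off-diagonal margin \<open>c\<close>.\<close>

lemma substochastic_weighted_sum_le:
  fixes P W :: "'k::finite \<Rightarrow> 'k \<Rightarrow> real"
  assumes P: "\<And>i j. P i j \<ge> 0"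
    and rows: "\<And>i. (\<Sum>j\<in>UNIV. P i j) \<le> 1" and cols: "\<And>j. (\<Sum>i\<in>UNIV. P i j) \<le> 1"
    and u: "\<And>i. u i \<ge> 0" and v: "\<And>j. v j \<ge> c"
    and diag: "\<And>i. W i i = u i + v i" and off: "\<And>i j. i \<noteq> j \<Longrightarrow> W i j + c \<le> u i + v j"
  shows "(\<Sum>i\<in>UNIV. \<Sum>j\<in>UNIV. W i j * P i j) \<le> (\<Sum>i\<in>UNIV. W i i) - c * (\<Sum>j\<in>UNIV. 1 - P j j)"
proof -
  have "(\<Sum>i\<in>UNIV. \<Sum>j\<in>UNIV. W i j * P i j)
      \<le> (\<Sum>i\<in>UNIV. \<Sum>j\<in>UNIV. (u i + (v j - c) + (if i = j then c else 0)) * P i j)"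
    using diag off P by (intro sum_mono mult_right_mono) (auto simp: algebra_simps)
  also have "\<dots> = (\<Sum>i\<in>UNIV. u i * (\<Sum>j\<in>UNIV. P i j)) + (\<Sum>j\<in>UNIV. (v j - c) * (\<Sum>i\<in>UNIV. P i j))
      + c * (\<Sum>j\<in>UNIV. P j j)"
  proof -
    have "(\<Sum>i\<in>UNIV. \<Sum>j\<in>UNIV. (v j - c) * P i j) = (\<Sum>j\<in>UNIV. (v j - c) * (\<Sum>i\<in>UNIV. P i j))"
      by (subst sum.swap) (simp add: sum_distrib_left)
    moreover have "(\<Sum>i\<in>UNIV. \<Sum>j\<in>UNIV. (if i = j then c else 0) * P i j) = c * (\<Sum>j\<in>UNIV. P j j)"
      by (simp add: sum_distrib_left if_distrib if_distribR cong: if_cong)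
    ultimately show ?thesis
      by (simp add: distrib_right sum.distrib sum_distrib_left)
  qed
  also have "\<dots> \<le> (\<Sum>i\<in>UNIV. u i) + (\<Sum>j\<in>UNIV. v j - c) + c * (\<Sum>j\<in>UNIV. P j j)"
    using u v rows cols by (intro add_mono order_refl sum_mono mult_left_le) auto
  also have "\<dots> = (\<Sum>i\<in>UNIV. W i i) - c * (\<Sum>j\<in>UNIV. 1 - P j j)"
    by (simp add: diag sum.distrib sum_subtractf algebra_simps)
  finally show ?thesis .
qed

lemma dF_sq_le_diag_deficit:
  fixes Q X :: "real^'k^'d"
  assumes Q: "Q \<in> Stiefel" and X: "X \<in> Stiefel"
  shows "(dF X Q)\<^sup>2 \<le> 2 * (\<Sum>j\<in>UNIV. 1 - ((transpose Q ** X)$j$j)\<^sup>2)"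
proof -
  define B where "B = transpose Q ** X"
  define q where "q j = (if B$j$j \<ge> 0 then 1 else -1 :: real)" for j
  have q: "\<forall>i. q i \<in> {1, -1}"
    by (simp add: q_def)
  have abs_B: "\<bar>B$j$j\<bar> \<le> 1" for j
  proof -
    have "(B$j$j)\<^sup>2 \<le> (\<Sum>i\<in>UNIV. (B$i$j)\<^sup>2)"
      by (rule member_le_sum) auto
    also have "\<dots> \<le> 1"
      unfolding B_def using Q X by (rule Stiefel_cross_column_sum_le)
    finally show ?thesis
      using abs_le_square_iff[of "B$j$j" 1] by simp
  qed
  have "inner X (Q ** diagm q) = inner (diagm q) B"
    by (simp add: inner_commute[of X] inner_matrix_mult_left B_def)
  also have "\<dots> = (\<Sum>j\<in>UNIV. B$j$j * q j)"
    by (simp add: inner_commute[of "diagm q"] inner_diagm)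
  also have "\<dots> = (\<Sum>j\<in>UNIV. \<bar>B$j$j\<bar>)"
    by (intro sum.cong) (auto simp: q_def)
  finally have "(norm (X - Q ** diagm q))\<^sup>2 = (\<Sum>j\<in>UNIV. 2 * (1 - \<bar>B$j$j\<bar>))"
    using inner_self_Stiefel[OF X] inner_self_Stiefel[OF Stiefel_mult_signs[OF Q q]]
    by (simp add: power2_norm_eq_inner inner_diff_left inner_diff_right inner_commute
        sum_subtractf sum_distrib_left[symmetric])
  also have "\<dots> \<le> (\<Sum>j\<in>UNIV. 2 * (1 - (B$j$j)\<^sup>2))"
  proof (intro sum_mono)
    fix j
    have "(B$j$j)\<^sup>2 = \<bar>B$j$j\<bar> * \<bar>B$j$j\<bar>"
      by (simp add: power2_eq_square)
    also have "\<dots> \<le> \<bar>B$j$j\<bar>"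
      using abs_B[of j] by (intro mult_right_le_one_le) auto
    finally show "2 * (1 - \<bar>B$j$j\<bar>) \<le> 2 * (1 - (B$j$j)\<^sup>2)"
      by simp
  qed
  finally have "(norm (X - Q ** diagm q))\<^sup>2 \<le> 2 * (\<Sum>j\<in>UNIV. 1 - (B$j$j)\<^sup>2)"
    by (simp add: sum_distrib_left)
  moreover have "(dF X Q)\<^sup>2 \<le> (norm (X - Q ** diagm q))\<^sup>2"
    using dF_le[OF q, of X Q] dF_nonneg[of X Q] by (intro power_mono) auto
  ultimately show ?thesis
    by (simp add: B_def)
qed

theorem quadratic_growth:
  fixes Q :: "real^'k::{finite,linorder}^'d" and lam a :: "'k \<Rightarrow> real"
  defines "M \<equiv> Q ** diagm lam ** transpose Q" and "D \<equiv> diagm a"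
  assumes Q: "Q \<in> Stiefel"
    and lam_dec: "\<And>i j. i < j \<Longrightarrow> lam i > lam j" and lam_pos: "\<And>i. lam i > 0"
    and a_dec: "\<And>i j. i < j \<Longrightarrow> a i > a j" and a_pos: "\<And>i. a i > 0"
  obtains \<eta> where "\<eta> > 0"
    "\<And>X. X \<in> Stiefel \<Longrightarrow> \<eta> * (dF X Q)\<^sup>2 \<le> quad_form M D Q - quad_form M D X"
proof -
  obtain c u v where c: "c > 0" and uv: "\<And>i. u i \<ge> 0" "\<And>j. v j \<ge> c"
    "\<And>i. u i + v i = lam i * a i" "\<And>i j. i \<noteq> j \<Longrightarrow> lam i * a j + c \<le> u i + v j"
    using separating_potentials[where lam = lam and a = a, OF lam_dec lam_pos a_dec a_pos] by blast
  have "(c/2) * (dF X Q)\<^sup>2 \<le> quad_form M D Q - quad_form M D X" if X: "X \<in> Stiefel" for X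
  proof -
    define P where "P i j = ((transpose Q ** X)$i$j)\<^sup>2" for i j
    have cols: "(\<Sum>i\<in>UNIV. P i j) \<le> 1" for j
      unfolding P_def using Q X by (rule Stiefel_cross_column_sum_le)
    have "transpose X ** Q = transpose (transpose Q ** X)"
      by (simp add: matrix_transpose_mul)
    then have rows: "(\<Sum>j\<in>UNIV. P i j) \<le> 1" for i
      using Stiefel_cross_column_sum_le[OF X Q, of i] by (simp add: P_def)
    have "(\<Sum>i\<in>UNIV. \<Sum>j\<in>UNIV. lam i * a j * P i j)
        \<le> (\<Sum>i\<in>UNIV. lam i * a i) - c * (\<Sum>j\<in>UNIV. 1 - P j j)"
    proof (rule substochastic_weighted_sum_le[where W = "\<lambda>i j. lam i * a j" and u = u and v = v])
      show "P i j \<ge> 0" for i j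
        by (simp add: P_def)
    qed (use rows cols uv in auto)
    moreover have "quad_form M D X = (\<Sum>i\<in>UNIV. \<Sum>j\<in>UNIV. lam i * a j * P i j)"
      by (simp add: M_def D_def quad_form_conj_diagm P_def)
    moreover have "quad_form M D Q = (\<Sum>i\<in>UNIV. lam i * a i)"
      unfolding M_def D_def using Q by (rule quad_form_Stiefel_center)
    ultimately have "quad_form M D X \<le> quad_form M D Q - c * (\<Sum>j\<in>UNIV. 1 - P j j)"
      by linarith
    moreover have "(c/2) * (dF X Q)\<^sup>2 \<le> c * (\<Sum>j\<in>UNIV. 1 - P j j)"
      using mult_left_mono[OF dF_sq_le_diag_deficit[OF Q X], of "c/2"] c by (simp add: P_def)
    ultimately show ?thesis
      by linarith
  qed
  then show thesis
    using that[of "c/2"] c by simp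
qed

section \<open>Local linear convergence\<close>

lemma exists_small_multiplier:
  fixes \<eta> C :: real
  assumes \<eta>: "0 < \<eta>" and C: "0 \<le> C"
  obtains t where "0 < t" "t \<le> 1/2" "t * C \<le> \<eta> / 2"
proof
  let ?t = "min (1/2) (\<eta> / (2 * C + 1))"
  show "0 < ?t"
    using \<eta> C by simp
  show "?t \<le> 1/2"
    by (rule min.cobounded1)
  have "?t * C \<le> \<eta> / (2 * C + 1) * C"
    using C by (intro mult_right_mono) simp_all
  also have "\<dots> \<le> \<eta> / 2"
    using \<eta> C by (simp add: field_simps)
  finally show "?t * C \<le> \<eta> / 2" .
qed

text \<open>With \<open>\<epsilon> = d\<^sub>F(X, Q) \<le> \<delta>\<close>, quadratic growth makes both error terms of the local
  ascent bound at most \<open>\<theta>/2\<close> times the gap.\<close>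

lemma contraction_step:
  fixes Q X Y :: "real^'k^'d" and lam a :: "'k \<Rightarrow> real"
  defines "M \<equiv> Q ** diagm lam ** transpose Q" and "D \<equiv> diagm a" and "k \<equiv> real CARD('k)"
  assumes Q: "Q \<in> Stiefel" and lam: "\<And>i. lam i \<ge> 0" and a: "\<And>i. a i \<ge> 0"
    and growth: "\<And>X. X \<in> Stiefel \<Longrightarrow> \<eta> * (dF X Q)\<^sup>2 \<le> quad_form M D Q - quad_form M D X"
    and \<eta>: "\<eta> > 0" and \<delta>: "0 \<le> \<delta>" "\<delta> \<le> 1" "(2 * sqrt k * norm M * norm D) * \<delta> \<le> \<eta> / 2"
    and \<alpha>: "\<alpha> \<ge> 0" and \<theta>: "0 \<le> \<theta>"
      "\<theta> * ((2 * (norm M * sqrt k * norm D) * (sqrt k * (1 + k/2)) + \<alpha>) * (1 + sqrt k)\<^sup>2) \<le> \<eta> / 2"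
    and X: "X \<in> Stiefel" and near: "quad_form M D Q - quad_form M D X \<le> \<delta>\<^sup>2 * \<eta>"
    and Y: "Y \<in> PSt (\<alpha> *\<^sub>R X + M ** X ** D)"
  shows "quad_form M D Q - quad_form M D Y \<le> (1 - \<theta>) * (quad_form M D Q - quad_form M D X)"
proof -
  define gap where "gap = quad_form M D Q - quad_form M D X"
  define C1 where "C1 = 2 * sqrt k * norm M * norm D"
  define C2 where "C2 = (2 * (norm M * sqrt k * norm D) * (sqrt k * (1 + k/2)) + \<alpha>) * (1 + sqrt k)\<^sup>2"
  obtain Q' where Q': "Q' \<in> Stiefel" and dF_eq: "dF X Q = norm (X - Q')"
    and M': "Q' ** diagm lam ** transpose Q' = M" and same_max: "quad_form M D Q' = quad_form M D Q"
    using nearest_signed_copy[OF Q, of X lam a] unfolding M_def D_def by blast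
  define \<epsilon> where "\<epsilon> = norm (X - Q')"
  have growth_X: "\<eta> * \<epsilon>\<^sup>2 \<le> gap"
    using growth[OF X] by (simp add: gap_def \<epsilon>_def dF_eq)
  then have "\<eta> * \<epsilon>\<^sup>2 \<le> \<eta> * \<delta>\<^sup>2"
    using near by (simp add: gap_def mult.commute)
  then have \<epsilon>_le: "\<epsilon> \<le> \<delta>"
    using \<eta> \<delta>(1) by (simp add: \<epsilon>_def power2_le_iff_abs_le)
  have Y': "Y \<in> PSt (\<alpha> *\<^sub>R X + (Q' ** diagm lam ** transpose Q') ** X ** diagm a)"
    using Y by (simp add: M' D_def)
  have "quad_form M D Y - quad_form M D X \<ge> 2 * \<theta> * gap - \<theta> * C1 * \<epsilon> ^ 3 - \<theta>\<^sup>2 * C2 * \<epsilon>\<^sup>2"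
    using quad_form_local_ascent[where lam = lam and a = a, OF Q' X lam a Y' \<alpha> \<theta>(1)] \<epsilon>_le \<delta>(2)
    unfolding M' D_def[symmetric]
    by (simp add: gap_def same_max C1_def C2_def k_def \<epsilon>_def)
  moreover have "C1 * \<epsilon> ^ 3 \<le> gap / 2"
  proof -
    have "C1 * \<epsilon> \<le> C1 * \<delta>"
      using \<epsilon>_le by (rule mult_left_mono) (simp add: C1_def k_def)
    then have "(C1 * \<epsilon>) * \<epsilon>\<^sup>2 \<le> (\<eta> / 2) * \<epsilon>\<^sup>2"
      using \<delta>(3) by (intro mult_right_mono) (simp_all add: C1_def)
    then show ?thesis
      using growth_X by (simp add: power2_eq_square power3_eq_cube mult_ac)
  qed
  moreover have "\<theta> * C2 * \<epsilon>\<^sup>2 \<le> gap / 2"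
    using mult_right_mono[OF \<theta>(2), of "\<epsilon>\<^sup>2"] growth_X by (simp add: C2_def)
  ultimately have "quad_form M D Y - quad_form M D X \<ge> \<theta> * gap"
    using mult_left_mono[of "C1 * \<epsilon> ^ 3" "gap / 2" \<theta>] mult_left_mono[of "\<theta> * C2 * \<epsilon>\<^sup>2" "gap / 2" \<theta>]
      \<theta>(1) by (simp add: power2_eq_square mult.assoc)
  then show ?thesis
    by (simp add: gap_def algebra_simps)
qed

lemma linear_convergence_of_local_contraction:
  fixes f d :: "'a \<Rightarrow> real" and F :: "'a \<Rightarrow> 'a set" and xs :: "nat \<Rightarrow> 'a"
  assumes \<eta>: "\<eta> > 0" and \<gamma>: "0 \<le> \<gamma>" "\<gamma> \<le> 1"
    and growth: "\<And>x. x \<in> S \<Longrightarrow> \<eta> * (d x)\<^sup>2 \<le> f x" and d: "\<And>x. d x \<ge> 0"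
    and F: "\<And>x. F x \<subseteq> S"
    and contract: "\<And>x y. x \<in> S \<Longrightarrow> f x \<le> r \<Longrightarrow> y \<in> F x \<Longrightarrow> f y \<le> \<gamma> * f x"
    and start: "xs 0 \<in> S" "f (xs 0) \<le> r" and iterate: "\<And>t. xs (Suc t) \<in> F (xs t)"
  shows "f (xs (Suc t)) \<le> \<gamma> * f (xs t) \<and> d (xs t) \<le> 1 / sqrt \<eta> * sqrt (f (xs 0)) * sqrt \<gamma> ^ t"
proof -
  have xs: "xs t \<in> S" for t
    using start(1) iterate F by (cases t) auto
  have f_nonneg: "f (xs t) \<ge> 0" for t
    using growth[OF xs[of t]] \<eta> by (smt (verit) zero_le_mult_iff zero_le_power2)
  have below_r: "\<gamma> ^ t * f (xs 0) \<le> r" for t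
    using \<gamma> f_nonneg[of 0] start(2) by (smt (verit) mult_left_le_one_le power_le_one zero_le_power)
  have decay: "f (xs t) \<le> \<gamma> ^ t * f (xs 0)" for t
  proof (induction t)
    case (Suc t)
    have "f (xs (Suc t)) \<le> \<gamma> * f (xs t)"
      using contract[OF xs order_trans[OF Suc below_r] iterate] .
    also have "\<dots> \<le> \<gamma> * (\<gamma> ^ t * f (xs 0))"
      using Suc \<gamma> by (intro mult_left_mono)
    finally show ?case
      by (simp add: mult.assoc)
  qed simp
  have small: "f (xs t) \<le> r" for t
    using decay below_r by (rule order_trans)
  have "(d (xs t))\<^sup>2 \<le> \<gamma> ^ t * f (xs 0) / \<eta>"
    using growth[OF xs[of t]] decay[of t] \<eta> by (simp add: field_simps)
  then have "d (xs t) \<le> sqrt (\<gamma> ^ t * f (xs 0) / \<eta>)"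
    using d by (simp add: real_le_rsqrt)
  also have "\<dots> = 1 / sqrt \<eta> * sqrt (f (xs 0)) * sqrt \<gamma> ^ t"
    by (simp add: real_sqrt_mult real_sqrt_divide real_sqrt_power)
  finally show ?thesis
    using contract[OF xs small iterate] by blast
qed

lemma local_linear_convergence:
  fixes Q :: "real^'k^'d" and lam a :: "'k \<Rightarrow> real"
  defines "M \<equiv> Q ** diagm lam ** transpose Q" and "D \<equiv> diagm a"
  assumes Q: "Q \<in> Stiefel" and lam: "\<And>i. lam i \<ge> 0" and a: "\<And>i. a i \<ge> 0"
    and \<eta>: "\<eta> > 0"
    and growth: "\<And>X. X \<in> Stiefel \<Longrightarrow> \<eta> * (dF X Q)\<^sup>2 \<le> quad_form M D Q - quad_form M D X"
  obtains \<delta>\<^sub>0 where "0 < \<delta>\<^sub>0" "\<delta>\<^sub>0 \<le> 1/2"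
    "\<And>\<delta> \<alpha>. 0 \<le> \<delta> \<Longrightarrow> \<delta> \<le> \<delta>\<^sub>0 \<Longrightarrow> 0 \<le> \<alpha> \<Longrightarrow> \<exists>c \<gamma>. c > 0 \<and> 0 < \<gamma> \<and> \<gamma> < 1 \<and>
       (\<forall>Xs. Xs 0 \<in> Stiefel \<and> quad_form M D Q - quad_form M D (Xs 0) \<le> \<delta>\<^sup>2 * \<eta>
          \<and> (\<forall>t. Xs (Suc t) \<in> PSt (\<alpha> *\<^sub>R Xs t + M ** Xs t ** D)) \<longrightarrow>
        (\<forall>t. quad_form M D Q - quad_form M D (Xs (Suc t))
               \<le> \<gamma> * (quad_form M D Q - quad_form M D (Xs t))
             \<and> dF (Xs t) Q \<le> c * sqrt (quad_form M D Q - quad_form M D (Xs 0)) * sqrt \<gamma> ^ t))"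
proof -
  define k where "k = real CARD('k)"
  obtain \<delta>\<^sub>0 where \<delta>\<^sub>0: "0 < \<delta>\<^sub>0" "\<delta>\<^sub>0 \<le> 1/2" "\<delta>\<^sub>0 * (2 * sqrt k * norm M * norm D) \<le> \<eta> / 2"
    using exists_small_multiplier[OF \<eta>, of "2 * sqrt k * norm M * norm D"] by (auto simp: k_def)
  show thesis
  proof (rule that[OF \<delta>\<^sub>0(1,2)])
    fix \<delta> \<alpha> :: real
    assume \<delta>: "0 \<le> \<delta>" "\<delta> \<le> \<delta>\<^sub>0" and \<alpha>: "0 \<le> \<alpha>"
    have "0 \<le> (2 * (norm M * sqrt k * norm D) * (sqrt k * (1 + k/2)) + \<alpha>) * (1 + sqrt k)\<^sup>2"
      using \<alpha> by (simp add: k_def)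
    then obtain \<theta> where \<theta>: "0 < \<theta>" "\<theta> \<le> 1/2"
      "\<theta> * ((2 * (norm M * sqrt k * norm D) * (sqrt k * (1 + k/2)) + \<alpha>) * (1 + sqrt k)\<^sup>2) \<le> \<eta> / 2"
      by (rule exists_small_multiplier[OF \<eta>])
    have "\<delta> * (2 * sqrt k * norm M * norm D) \<le> \<delta>\<^sub>0 * (2 * sqrt k * norm M * norm D)"
      using \<delta>(2) by (rule mult_right_mono) (simp add: k_def)
    then have "(2 * sqrt k * norm M * norm D) * \<delta> \<le> \<eta> / 2"
      using \<delta>\<^sub>0(3) mult.commute[of "2 * sqrt k * norm M * norm D" \<delta>] by linarith
    then have contract: "quad_form M D Q - quad_form M D Y \<le> (1 - \<theta>) * (quad_form M D Q - quad_form M D X)"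
      if "X \<in> Stiefel" "quad_form M D Q - quad_form M D X \<le> \<delta>\<^sup>2 * \<eta>"
        "Y \<in> PSt (\<alpha> *\<^sub>R X + M ** X ** D)" for X Y
      using contraction_step[where Q = Q and lam = lam and a = a, folded M_def D_def k_def,
          OF Q lam a growth \<eta> \<delta>(1) _ _ \<alpha> less_imp_le[OF \<theta>(1)] \<theta>(3) that] \<delta> \<delta>\<^sub>0(2)
      by linarith
    have PSt_St: "PSt (\<alpha> *\<^sub>R X + M ** X ** D) \<subseteq> Stiefel" for X
      by (auto simp: PSt_def)
    show "\<exists>c \<gamma>. c > 0 \<and> 0 < \<gamma> \<and> \<gamma> < 1 \<and>
       (\<forall>Xs. Xs 0 \<in> Stiefel \<and> quad_form M D Q - quad_form M D (Xs 0) \<le> \<delta>\<^sup>2 * \<eta>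
          \<and> (\<forall>t. Xs (Suc t) \<in> PSt (\<alpha> *\<^sub>R Xs t + M ** Xs t ** D)) \<longrightarrow>
        (\<forall>t. quad_form M D Q - quad_form M D (Xs (Suc t))
               \<le> \<gamma> * (quad_form M D Q - quad_form M D (Xs t))
             \<and> dF (Xs t) Q \<le> c * sqrt (quad_form M D Q - quad_form M D (Xs 0)) * sqrt \<gamma> ^ t))"
      using linear_convergence_of_local_contraction[where f = "\<lambda>X. quad_form M D Q - quad_form M D X",
          OF \<eta> _ _ growth dF_nonneg PSt_St contract] \<theta> \<eta>
      by (intro exI[of _ "1 / sqrt \<eta>"] exI[of _ "1 - \<theta>"]) auto
  qed
qed

theorem theorem1:
  fixes Q :: "real^'k::{finite,linorder}^'d::finite"
    and lam a :: "'k \<Rightarrow> real"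
  assumes dK: "CARD('d) > CARD('k)"
    and Q: "Q \<in> Stiefel"
    and lam_dec: "\<And>i j. i < j \<Longrightarrow> lam i > lam j"
    and lam_pos: "\<And>i. lam i > 0"
    and a_dec: "\<And>i j. i < j \<Longrightarrow> a i > a j"
    and a_pos: "\<And>i. a i > 0"
  defines "i1 \<equiv> (LEAST i. True)"
    and "iK \<equiv> (GREATEST i. True)"
  shows "\<exists>\<delta> \<eta>. 0 < \<delta> \<and> \<delta> < sqrt 2 / 2
     \<and> lam iK * a iK - lam i1 * a i1 * \<delta> > 0
     \<and> \<eta> > 0
     \<and> (\<forall>X \<in> Stiefel. gfun Q lam a Q - gfun Q lam a X \<ge> \<eta> * (dF X Q)\<^sup>2)
     \<and> (\<forall>\<alpha>. 0 < \<alpha> \<and> \<alpha> < lam iK * a iK - lam i1 * a i1 * \<delta> \<longrightarrow>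
          (\<exists>c \<gamma>. c > 0 \<and> 0 < \<gamma> \<and> \<gamma> < 1 \<and>
             (\<forall>Xs.
                Xs 0 \<in> Stiefel
                \<and> gfun Q lam a Q - gfun Q lam a (Xs 0) \<le> \<delta>\<^sup>2 * \<eta>
                \<and> (\<forall>t. Xs (Suc t) \<in> PSt (Aop \<alpha> Q lam a (Xs t)))
                \<longrightarrow> (\<forall>t. gfun Q lam a Q - gfun Q lam a (Xs (Suc t))
                          \<le> \<gamma> * (gfun Q lam a Q - gfun Q lam a (Xs t))
                        \<and> dF (Xs t) Q
                          \<le> c * sqrt (gfun Q lam a Q - gfun Q lam a (Xs 0)) * (sqrt \<gamma>) ^ t))))"
proof -
  define M where "M = Q ** diagm lam ** transpose Q"
  define D where "D = diagm a"
  have lam0: "\<And>i. lam i \<ge> 0" and a0: "\<And>i. a i \<ge> 0"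
    using lam_pos a_pos less_imp_le by blast+
  have gfun: "gfun Q lam a X = quad_form M D X" for X
    unfolding M_def D_def using lam0 by (rule gfun_eq_quad_form)
  have Aop: "Aop \<alpha> Q lam a X = \<alpha> *\<^sub>R X + M ** X ** D" for \<alpha> X
    unfolding M_def D_def using lam0 by (rule Aop_eq)
  obtain \<eta> where \<eta>: "\<eta> > 0"
    and growth: "\<And>X. X \<in> Stiefel \<Longrightarrow> \<eta> * (dF X Q)\<^sup>2 \<le> quad_form M D Q - quad_form M D X"
    using quadratic_growth[where lam = lam and a = a, OF Q lam_dec lam_pos a_dec a_pos]
    unfolding M_def D_def by blast
  obtain \<delta>\<^sub>0 where \<delta>\<^sub>0: "0 < \<delta>\<^sub>0" "\<delta>\<^sub>0 \<le> 1/2" and converges: "\<And>\<delta> \<alpha>. 0 \<le> \<delta> \<Longrightarrow> \<delta> \<le> \<delta>\<^sub>0 \<Longrightarrow> 0 \<le> \<alpha> \<Longrightarrow>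
      \<exists>c \<gamma>. c > 0 \<and> 0 < \<gamma> \<and> \<gamma> < 1 \<and> (\<forall>Xs. Xs 0 \<in> Stiefel
          \<and> quad_form M D Q - quad_form M D (Xs 0) \<le> \<delta>\<^sup>2 * \<eta>
          \<and> (\<forall>t. Xs (Suc t) \<in> PSt (\<alpha> *\<^sub>R Xs t + M ** Xs t ** D)) \<longrightarrow>
        (\<forall>t. quad_form M D Q - quad_form M D (Xs (Suc t)) \<le> \<gamma> * (quad_form M D Q - quad_form M D (Xs t))
          \<and> dF (Xs t) Q \<le> c * sqrt (quad_form M D Q - quad_form M D (Xs 0)) * sqrt \<gamma> ^ t))"
    using local_linear_convergence[where Q = Q and lam = lam and a = a, folded M_def D_def,
        OF Q lam0 a0 \<eta> growth] by blast
  define \<delta> where "\<delta> = min \<delta>\<^sub>0 (lam iK * a iK / (2 * (lam i1 * a i1)))"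
  have "lam i1 * a i1 * \<delta> \<le> lam i1 * a i1 * (lam iK * a iK / (2 * (lam i1 * a i1)))"
    using lam_pos[of i1] a_pos[of i1] by (intro mult_left_mono) (simp_all add: \<delta>_def)
  also have "\<dots> < lam iK * a iK"
    using lam_pos a_pos by (simp add: field_simps)
  finally have \<delta>_gap: "lam iK * a iK - lam i1 * a i1 * \<delta> > 0"
    by simp
  have \<delta>: "0 < \<delta>" "\<delta> \<le> \<delta>\<^sub>0"
    using \<delta>\<^sub>0 lam_pos a_pos by (simp_all add: \<delta>_def)
  moreover have "(1::real) < sqrt 2"
    by simp
  ultimately have \<delta>_small: "\<delta> < sqrt 2 / 2"
    using \<delta>\<^sub>0(2) by linarith
  show ?thesis
    unfolding gfun Aop
  proof (rule exI[of _ \<delta>], rule exI[of _ \<eta>], intro conjI \<delta>(1) \<delta>_small \<delta>_gap \<eta> ballI allI impI)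
    show "\<eta> * (dF X Q)\<^sup>2 \<le> quad_form M D Q - quad_form M D X" if "X \<in> Stiefel" for X
      using growth[OF that] .
  qed (use converges[OF less_imp_le[OF \<delta>(1)] \<delta>(2)] in simp)
qed

end
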